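(* Let $I\subset\mathbb R$ be an open interval and let $\mu,\nu$ be locally finite measures on $(I,\mathcal B(I))$. Then the derivative $\overline D_\nu(\mu)$ exists $\mu,\nu$-a.e. on $I$ and is a version of the generalized Radon–Nikodym derivative $\partial\mu/\partial\nu$. In particular, the same holds for the symmetric derivative $D^{\mathrm{sym}}_\nu(\mu)$.
   Context: For $x\in\mathbb R$, $r>0$, $B(x,r)$ is the open ball of center $x$ and radius $r$. A sequence $(A_j)_{j\ge1}\subset\mathcal B(I)$ converges $\nu$-measure-metrizably to $x\in I$ if there are $r_j>0$ with $A_j\subset B(x,r_j)\subset I$ for all $j$, $r_j\to0$, and there is $\alpha\in(0,1]$ with $\nu(A_j)\ge\alpha\,\nu(B(x,r_j))$ for all $j$. $\overline D_\nu(\mu)(x)=z\in[0,\infty]$ means that $\lim_{j\to\infty}\mu(A_j)/\nu(A_j)=z$ for every sequence $(A_j)$ that converges both $\mu$-measure-metrizably and $\nu$-measure-metrizably to $x$. The symmetric derivative is $D^{\mathrm{sym}}_\nu(\mu)(x)=\lim_{r\searrow0}\mu(B(x,r))/\nu(B(x,r))$ when this limit exists in $[0,\infty]$. Generalized Radon–Nikodym derivative: $\partial\mu/\partial\nu$ is a Borel map $I\to[0,\infty]$ with $\frac{\partial\mu}{\partial\nu}=\frac{d\mu/d\gamma}{d\nu/d\gamma}$ $\mu,\nu$-a.e. for any $\sigma$-finite $\gamma$ dominating $\mu$ and $\nu$ (independent of $\gamma$). "$\mu,\nu$-a.e." means outside a set null for both $\mu$ and $\nu$. *)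

theory Defs
  imports "HOL-Analysis.Analysis"
begin

abbreviation borel_on :: "real set \<Rightarrow> real measure" where
  "borel_on I \<equiv> restrict_space borel I"

definition locally_finite_on :: "real set \<Rightarrow> real measure \<Rightarrow> bool" where
  "locally_finite_on I \<mu> \<longleftrightarrow>
     sets \<mu> = sets (borel_on I) \<and>
     (\<forall>K. compact K \<and> K \<subseteq> I \<longrightarrow> emeasure \<mu> K < \<infinity>)"

definition mm_converges :: "real measure \<Rightarrow> real set \<Rightarrow> (nat \<Rightarrow> real set) \<Rightarrow> real \<Rightarrow> bool" where
  "mm_converges \<nu> I A x \<longleftrightarrow>
     (\<forall>j. A j \<in> sets (borel_on I)) \<and>
     (\<exists>r :: nat \<Rightarrow> real.
        (\<forall>j. r j > 0 \<and> A j \<subseteq> ball x (r j) \<and> ball x (r j) \<subseteq> I) \<and>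
        r \<longlonglongrightarrow> 0 \<and>
        (\<exists>\<alpha>::real. 0 < \<alpha> \<and> \<alpha> \<le> 1 \<and>
           (\<forall>j. emeasure \<nu> (A j) \<ge> ennreal \<alpha> * emeasure \<nu> (ball x (r j)))))"

text \<open>\<open>Dbar \<mu> \<nu> I x z\<close>: the derivative of mu w.r.t. nu at x exists and equals z.
  Quotients are taken in ennreal (a/0 = \<infinity> for a > 0, 0/0 = 0).\<close>
definition Dbar :: "real measure \<Rightarrow> real measure \<Rightarrow> real set \<Rightarrow> real \<Rightarrow> ennreal \<Rightarrow> bool" where
  "Dbar \<mu> \<nu> I x z \<longleftrightarrow>
     (\<forall>A. mm_converges \<mu> I A x \<and> mm_converges \<nu> I A x \<longrightarrow>
        ((\<lambda>j. emeasure \<mu> (A j) / emeasure \<nu> (A j)) \<longlongrightarrow> z) sequentially)"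

definition Dsym :: "real measure \<Rightarrow> real measure \<Rightarrow> real \<Rightarrow> ennreal \<Rightarrow> bool" where
  "Dsym \<mu> \<nu> x z \<longleftrightarrow>
     ((\<lambda>r. emeasure \<mu> (ball x r) / emeasure \<nu> (ball x r)) \<longlongrightarrow> z) (at_right 0)"

definition gen_RN_deriv :: "real set \<Rightarrow> real measure \<Rightarrow> real measure \<Rightarrow> (real \<Rightarrow> ennreal) \<Rightarrow> bool" where
  "gen_RN_deriv I \<mu> \<nu> f \<longleftrightarrow>
     f \<in> borel_measurable (borel_on I) \<and>
     (\<forall>\<gamma>. sigma_finite_measure \<gamma> \<and> sets \<gamma> = sets (borel_on I) \<and>
          absolutely_continuous \<gamma> \<mu> \<and> absolutely_continuous \<gamma> \<nu> \<longrightarrow>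
          (\<exists>N \<in> null_sets \<mu> \<inter> null_sets \<nu>.
             \<forall>x \<in> I - N. f x = RN_deriv \<gamma> \<mu> x / RN_deriv \<gamma> \<nu> x))"

end

theory Submission
  imports Defs
begin

lemma ennreal_mult_divide_cancel:
  fixes u s :: ennreal
  assumes "s \<noteq> top" "u \<le> s"
  shows "s * (u / s) = u"
proof (cases "s = 0")
  case False
  have "s * (u / s) = u * s / s" by (simp add: ennreal_times_divide mult.commute)
  also have "\<dots> = u" using False assms(1) by (rule ennreal_mult_divide_eq)
  finally show ?thesis .
qed (use assms(2) in simp)

lemma ennreal_divide_divide_cancel:
  fixes u v s :: ennreal
  assumes uv: "u + v = s" and "s \<noteq> 0" "s \<noteq> top"
  shows "(u / s) / (v / s) = u / v"
proof -
  have "u \<noteq> top" "v \<noteq> top" using assms by auto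
  obtain ur where u: "u = ennreal ur" "0 \<le> ur"
    using \<open>u \<noteq> top\<close> by (cases u rule: ennreal_cases) auto
  obtain vr where v: "v = ennreal vr" "0 \<le> vr"
    using \<open>v \<noteq> top\<close> by (cases v rule: ennreal_cases) auto
  define sr where "sr = ur + vr"
  have s: "s = ennreal sr" using uv u v by (simp add: sr_def)
  have sr: "0 < sr" using s \<open>s \<noteq> 0\<close> u(2) v(2) unfolding sr_def
    by (cases "ur + vr = 0") auto
  have us: "u / s = ennreal (ur / sr)" and vs: "v / s = ennreal (vr / sr)"
    using u v s sr by (simp_all add: divide_ennreal)
  show ?thesis
  proof (cases "vr = 0")
    case True
    have "ur / sr \<le> 0 \<longleftrightarrow> ur = 0" using sr u(2) by (auto simp: divide_le_0_iff)
    then show ?thesis using True us vs u v by (simp add: ennreal_eq_0_iff)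
  next
    case False
    then have "(u / s) / (v / s) = ennreal ((ur / sr) / (vr / sr))"
      using us vs sr u(2) v(2) by (simp add: divide_ennreal)
    also have "\<dots> = u / v" using sr u v False by (simp add: divide_ennreal)
    finally show ?thesis .
  qed
qed

lemma ennreal_odds_eq_divide:
  fixes m n :: real
  assumes "0 \<le> m" "0 \<le> n" "0 < m + n"
  shows "ennreal (m / (m + n)) / ennreal (1 - m / (m + n)) = ennreal m / ennreal n"
proof -
  have "1 - m / (m + n) = n / (m + n)" using assms by (simp add: field_simps)
  moreover have "ennreal (p / (m + n)) = ennreal p / ennreal (m + n)" if "0 \<le> p" for p
    by (rule divide_ennreal[symmetric]) (use assms that in auto)
  ultimately have "ennreal (m / (m + n)) / ennreal (1 - m / (m + n))
      = (ennreal m / ennreal (m + n)) / (ennreal n / ennreal (m + n))"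
    using assms by simp
  also have "\<dots> = ennreal m / ennreal n"
    using assms by (intro ennreal_divide_divide_cancel) (auto simp: ennreal_plus)
  finally show ?thesis .
qed

lemma tendsto_ennreal_odds:
  fixes t :: "nat \<Rightarrow> real"
  assumes t: "t \<longlonglongrightarrow> t0" and ev: "\<forall>\<^sub>F j in sequentially. 0 \<le> t j \<and> t j \<le> 1"
    and t0: "0 \<le> t0" "t0 \<le> 1"
  shows "(\<lambda>j. ennreal (t j) / ennreal (1 - t j)) \<longlonglongrightarrow> ennreal t0 / ennreal (1 - t0)"
proof (cases "t0 < 1")
  case True
  have "(\<lambda>j. ennreal (t j / (1 - t j))) \<longlonglongrightarrow> ennreal (t0 / (1 - t0))"
    using True by (intro tendsto_ennrealI tendsto_divide tendsto_diff tendsto_const t) auto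
  moreover have "\<forall>\<^sub>F j in sequentially. ennreal (t j / (1 - t j)) = ennreal (t j) / ennreal (1 - t j)"
    using ev order_tendstoD(2)[OF t True] by eventually_elim (simp add: divide_ennreal)
  moreover have "ennreal (t0 / (1 - t0)) = ennreal t0 / ennreal (1 - t0)"
    using True t0 by (simp add: divide_ennreal)
  ultimately show ?thesis using Lim_transform_eventually by metis
next
  case False
  then have "t0 = 1" using t0 by simp
  have "(\<lambda>j. ennreal (t j) / ennreal (1 - t j)) \<longlonglongrightarrow> top"
  proof (rule order_tendstoI)
    fix y :: ennreal assume "y < top"
    then obtain yr where yr: "y = ennreal yr" "0 \<le> yr" by (cases y rule: ennreal_cases) auto
    have "yr / (1 + yr) < 1" using yr by simp
    then have "\<forall>\<^sub>F j in sequentially. yr / (1 + yr) < t j"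
      using order_tendstoD(1)[OF t] \<open>t0 = 1\<close> by simp
    with ev show "\<forall>\<^sub>F j in sequentially. y < ennreal (t j) / ennreal (1 - t j)"
    proof eventually_elim
      case (elim j)
      have less: "yr < t j * (1 + yr)" using elim(2) yr by (simp add: divide_less_eq)
      have pos: "t j > 0"
      proof (rule ccontr)
        assume "\<not> t j > 0"
        then have "t j * (1 + yr) \<le> 0" using yr by (intro mult_nonpos_nonneg) auto
        then show False using less yr by linarith
      qed
      show ?case
      proof (cases "t j = 1")
        case True
        then show ?thesis using \<open>y < top\<close> by simp
      next
        case False
        then have "1 - t j > 0" using elim(1) by simp
        then have "yr < t j / (1 - t j)" using less by (simp add: less_divide_eq algebra_simps)
        then show ?thesis using yr \<open>1 - t j > 0\<close> pos by (simp add: divide_ennreal ennreal_less_iff)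
      qed
    qed
  qed simp
  then show ?thesis using \<open>t0 = 1\<close> by simp
qed

lemma ennreal_add_eq_1:
  fixes a b :: ennreal
  assumes ab: "a + b = 1"
  shows "a = ennreal (min 1 (enn2real a)) \<and> b = ennreal (1 - min 1 (enn2real a))"
proof -
  have "a \<le> 1" using ab by (metis le_iff_add)
  then obtain r where r: "a = ennreal r" "0 \<le> r" "r \<le> 1"
    by (cases a rule: ennreal_cases) (auto simp: top_unique)
  have "b \<le> 1" using ab by (metis add.commute le_iff_add)
  then obtain s where s: "b = ennreal s" "0 \<le> s"
    by (cases b rule: ennreal_cases) (auto simp: top_unique)
  have "ennreal (r + s) = ennreal 1" using ab r s by simp
  then have "r + s = 1" using r(2) s(2) by (subst (asm) ennreal_inj) auto
  then show ?thesis using r s by simp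
qed

lemma three_intervals_cover:
  fixes x :: real
  assumes "x \<in> {a1<..<b1}" "x \<in> {a2<..<b2}" "x \<in> {a3<..<b3}"
  shows "{a1<..<b1} \<subseteq> {a2<..<b2} \<union> {a3<..<b3} \<or> {a2<..<b2} \<subseteq> {a1<..<b1} \<union> {a3<..<b3}
       \<or> {a3<..<b3} \<subseteq> {a1<..<b1} \<union> {a2<..<b2}"
  using assms by (auto simp: subset_eq)

lemma finite_interval_subcover_overlap_le_2:
  fixes \<B> :: "real set set"
  assumes "finite \<B>" and "\<forall>B\<in>\<B>. \<exists>a b. B = {a<..<b}"
  shows "\<exists>\<B>'\<subseteq>\<B>. \<Union>\<B>' = \<Union>\<B> \<and> (\<forall>x. card {B\<in>\<B>'. x \<in> B} \<le> 2)"
  using assms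
proof (induction "card \<B>" arbitrary: \<B> rule: less_induct)
  case less
  show ?case
  proof (cases "\<exists>B\<in>\<B>. B \<subseteq> \<Union>(\<B> - {B})")
    case True
    then obtain B where B: "B \<in> \<B>" "B \<subseteq> \<Union>(\<B> - {B})" by blast
    have smaller: "card (\<B> - {B}) < card \<B>"
      using B(1) less.prems(1) by (rule card_Diff1_less[rotated])
    have "finite (\<B> - {B})" "\<forall>B'\<in>\<B> - {B}. \<exists>a b. B' = {a<..<b}"
      using less.prems by auto
    from less.hyps[OF smaller this] obtain \<B>' where
      "\<B>' \<subseteq> \<B> - {B}" "\<Union>\<B>' = \<Union>(\<B> - {B})" "\<forall>x. card {B\<in>\<B>'. x \<in> B} \<le> 2"
      by blast
    moreover have "\<Union>(\<B> - {B}) = \<Union>\<B>" using B by blast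
    ultimately show ?thesis by (intro exI[of _ \<B>']) auto
  next
    case irredundant: False
    have "card {B\<in>\<B>. x \<in> B} \<le> 2" for x
    proof (rule ccontr)
      assume "\<not> ?thesis"
      then have "3 \<le> card {B\<in>\<B>. x \<in> B}" by simp
      then obtain T where T: "T \<subseteq> {B\<in>\<B>. x \<in> B}" "card T = 3"
        using obtain_subset_with_card_n by metis
      then obtain p q r where pqr: "T = {p, q, r}" "p \<noteq> q" "q \<noteq> r" "p \<noteq> r"
        unfolding card_3_iff by blast
      have in_\<B>: "p \<in> \<B>" "q \<in> \<B>" "r \<in> \<B>" and x: "x \<in> p" "x \<in> q" "x \<in> r"
        using T(1) pqr(1) by auto
      obtain a1 b1 where p: "p = {a1<..<b1}" using in_\<B>(1) less.prems(2) by blast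
      obtain a2 b2 where q: "q = {a2<..<b2}" using in_\<B>(2) less.prems(2) by blast
      obtain a3 b3 where r: "r = {a3<..<b3}" using in_\<B>(3) less.prems(2) by blast
      have "p \<subseteq> q \<union> r \<or> q \<subseteq> p \<union> r \<or> r \<subseteq> p \<union> q"
        using three_intervals_cover[of x a1 b1 a2 b2 a3 b3] x unfolding p q r by blast
      moreover have "q \<union> r \<subseteq> \<Union>(\<B> - {p})" "p \<union> r \<subseteq> \<Union>(\<B> - {q})" "p \<union> q \<subseteq> \<Union>(\<B> - {r})"
        using in_\<B> pqr by auto
      ultimately show False using irredundant in_\<B> by (meson subset_trans)
    qed
    then show ?thesis by (intro exI[of _ \<B>]) auto
  qed
qed

lemma sum_emeasure_inter_le_twice:
  assumes "finite \<B>" "\<B> \<subseteq> sets M" "E \<in> sets M" "\<And>x. card {B\<in>\<B>. x \<in> B} \<le> 2"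
  shows "(\<Sum>B\<in>\<B>. emeasure M (B \<inter> E)) \<le> 2 * emeasure M E"
proof -
  have "(\<Sum>B\<in>\<B>. emeasure M (B \<inter> E)) = (\<Sum>B\<in>\<B>. \<integral>\<^sup>+x. indicator (B \<inter> E) x \<partial>M)"
    using assms by (intro sum.cong) auto
  also have "\<dots> = (\<integral>\<^sup>+x. (\<Sum>B\<in>\<B>. indicator (B \<inter> E) x) \<partial>M)"
    using assms by (intro nn_integral_sum[symmetric]) auto
  also have "\<dots> \<le> \<integral>\<^sup>+x. 2 * indicator E x \<partial>M"
  proof (rule nn_integral_mono)
    fix x
    show "(\<Sum>B\<in>\<B>. indicator (B \<inter> E) x :: ennreal) \<le> 2 * indicator E x"
    proof (cases "x \<in> E")
      case True
      have "(\<Sum>B\<in>\<B>. indicator (B \<inter> E) x :: ennreal) = (\<Sum>B\<in>\<B>. if x \<in> B then 1 else 0)"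
        using True by (intro sum.cong) (auto simp: indicator_def)
      also have "\<dots> = of_nat (card {B\<in>\<B>. x \<in> B})"
        using assms(1) by (simp flip: sum.inter_filter)
      also have "\<dots> \<le> 2" using assms(4)[of x] by (simp flip: of_nat_le_iff)
      finally show ?thesis using True by simp
    qed (simp add: indicator_def)
  qed
  also have "\<dots> = 2 * emeasure M E" using assms(3) by (rule nn_integral_cmult_indicator)
  finally show ?thesis .
qed

locale finite_borel_measure = finite_measure M for M :: "real measure" +
  assumes sets_eq_borel [measurable_cong]: "sets M = sets borel"
begin

lemma sum_measure_inter_le_twice:
  assumes "finite \<B>" "\<B> \<subseteq> sets borel" "E \<in> sets borel" "\<And>x. card {B\<in>\<B>. x \<in> B} \<le> 2"
  shows "(\<Sum>B\<in>\<B>. measure M (B \<inter> E)) \<le> 2 * measure M E"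
proof -
  have "ennreal (\<Sum>B\<in>\<B>. measure M (B \<inter> E)) = (\<Sum>B\<in>\<B>. emeasure M (B \<inter> E))"
    by (simp add: emeasure_eq_measure)
  also have "\<dots> \<le> 2 * emeasure M E"
    using assms by (intro sum_emeasure_inter_le_twice) (auto simp: sets_eq_borel)
  also have "\<dots> = ennreal (2 * measure M E)" by (simp add: emeasure_eq_measure ennreal_mult)
  finally show ?thesis by (subst (asm) ennreal_le_iff) auto
qed

lemma maximal_inequality_compact:
  assumes E: "E \<in> sets borel" and C: "compact C" and l: "l \<ge> 0"
    and dense: "\<forall>x\<in>C. \<exists>r>0. l * measure M (ball x r) \<le> measure M (ball x r \<inter> E)"
  shows "l * measure M C \<le> 2 * measure M E"
proof -
  obtain r where r: "\<forall>x\<in>C. r x > 0 \<and> l * measure M (ball x (r x)) \<le> measure M (ball x (r x) \<inter> E)"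
    using dense by metis
  then have "C \<subseteq> (\<Union>x\<in>C. ball x (r x))" by auto
  then obtain T where T: "T \<subseteq> C" "finite T" "C \<subseteq> (\<Union>x\<in>T. ball x (r x))"
    using compactE_image[OF C, of C "\<lambda>x. ball x (r x)"] by auto
  have "\<forall>B\<in>(\<lambda>x. ball x (r x)) ` T. \<exists>a b. B = {a<..<b}"
    by (auto simp: ball_eq_greaterThanLessThan)
  then obtain \<B> where \<B>: "\<B> \<subseteq> (\<lambda>x. ball x (r x)) ` T" "\<Union>\<B> = (\<Union>x\<in>T. ball x (r x))"
      "\<forall>x. card {B\<in>\<B>. x \<in> B} \<le> 2"
    using finite_interval_subcover_overlap_le_2[of "(\<lambda>x. ball x (r x)) ` T"] T(2) by auto
  have fin: "finite \<B>" using \<B>(1) T(2) by (meson finite_imageI finite_subset)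
  have borel: "\<B> \<subseteq> sets borel" using \<B>(1) by auto
  have "\<Union>\<B> \<in> sets M" using fin borel by (intro sets.finite_Union) (auto simp: sets_eq_borel)
  moreover have "C \<subseteq> \<Union>\<B>" using T(3) \<B>(2) by simp
  ultimately have "measure M C \<le> measure M (\<Union>\<B>)" by (intro finite_measure_mono)
  also have "\<dots> \<le> (\<Sum>B\<in>\<B>. measure M B)"
    using fin borel by (intro measure_Union_le) auto
  finally have "l * measure M C \<le> l * (\<Sum>B\<in>\<B>. measure M B)"
    using l by (rule mult_left_mono)
  also have "\<dots> = (\<Sum>B\<in>\<B>. l * measure M B)" by (simp add: sum_distrib_left)
  also have "\<dots> \<le> (\<Sum>B\<in>\<B>. measure M (B \<inter> E))"
    using \<B>(1) T(1) r by (intro sum_mono) auto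
  also have "\<dots> \<le> 2 * measure M E"
    using fin borel E \<B>(3) by (intro sum_measure_inter_le_twice) auto
  finally show ?thesis .
qed

lemma maximal_inequality:
  assumes E: "E \<in> sets borel" and S: "S \<in> sets borel" and l: "l \<ge> 0"
    and dense: "\<forall>x\<in>S. \<exists>r>0. l * measure M (ball x r) \<le> measure M (ball x r \<inter> E)"
  shows "l * measure M S \<le> 2 * measure M E"
proof -
  have "ennreal l * emeasure M S = (SUP K\<in>{K. K \<subseteq> S \<and> compact K}. ennreal l * emeasure M K)"
    using S by (simp add: inner_regular[OF sets_eq_borel] SUP_mult_left_ennreal)
  also have "\<dots> \<le> ennreal (2 * measure M E)"
  proof (rule SUP_least)
    fix K assume "K \<in> {K. K \<subseteq> S \<and> compact K}"
    then have "l * measure M K \<le> 2 * measure M E"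
      using dense by (intro maximal_inequality_compact[OF E _ l]) auto
    then show "ennreal l * emeasure M K \<le> ennreal (2 * measure M E)"
      using l by (simp add: emeasure_eq_measure flip: ennreal_mult)
  qed
  finally show ?thesis using l by (simp add: emeasure_eq_measure flip: ennreal_mult)
qed

lemma measure_ball_inter_approx_from_below:
  assumes E: "E \<in> sets borel" and r: "r > 0" and c: "c < measure M (ball x r \<inter> E)"
  shows "\<exists>s. 0 < s \<and> s < r \<and> c < measure M (ball x s \<inter> E)"
proof -
  define s where "s n = r - r / real (n + 2)" for n :: nat
  have s: "0 < s n" "s n < r" for n
  proof -
    have "0 < r / real (n + 2)" using r by simp
    moreover have "r / real (n + 2) \<le> r / 2" using r by (intro divide_left_mono) auto
    ultimately show "0 < s n" "s n < r" unfolding s_def using r by linarith+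
  qed
  have inc: "incseq (\<lambda>n. ball x (s n) \<inter> E)"
    using r by (intro incseq_SucI Int_mono subset_ball order.refl)
      (simp add: s_def divide_left_mono)
  have union: "(\<Union>n. ball x (s n) \<inter> E) = ball x r \<inter> E"
  proof (intro equalityI subsetI)
    fix y assume y: "y \<in> ball x r \<inter> E"
    obtain n :: nat where "r / (r - dist x y) < real n" using reals_Archimedean2 by blast
    then have "r / real (n + 2) < r - dist x y"
      using y by (simp add: field_simps)
    then have "y \<in> ball x (s n) \<inter> E" using y by (simp add: s_def)
    then show "y \<in> (\<Union>n. ball x (s n) \<inter> E)" by blast
  next
    fix y assume "y \<in> (\<Union>n. ball x (s n) \<inter> E)"
    then obtain n where "dist x y < s n" "y \<in> E" by auto
    with s(2)[of n] show "y \<in> ball x r \<inter> E" by simp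
  qed
  have "(\<lambda>n. measure M (ball x (s n) \<inter> E)) \<longlonglongrightarrow> measure M (\<Union>n. ball x (s n) \<inter> E)"
    using E inc by (intro finite_Lim_measure_incseq) (auto simp: sets_eq_borel)
  then have "(\<lambda>n. measure M (ball x (s n) \<inter> E)) \<longlonglongrightarrow> measure M (ball x r \<inter> E)"
    by (simp only: union)
  from order_tendstoD(1)[OF this c] obtain n where "c < measure M (ball x (s n) \<inter> E)"
    by (auto simp: eventually_sequentially)
  with s show ?thesis by blast
qed

end

definition zero_density_at :: "real measure \<Rightarrow> real set \<Rightarrow> real \<Rightarrow> bool" where
  "zero_density_at M F x \<longleftrightarrow>
     (\<forall>l>0. \<forall>\<^sub>F r in at_right 0. measure M (ball x r \<inter> F) \<le> l * measure M (ball x r))"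

context finite_borel_measure
begin

lemma open_points_with_dense_ball:
  assumes E: "E \<in> sets borel" and l: "l \<ge> 0"
  shows "open {x. \<exists>r>0. l * measure M (ball x r) < measure M (ball x r \<inter> E)}"
    (is "open ?S")
  unfolding open_contains_ball
proof
  fix x assume "x \<in> ?S"
  then obtain r where r: "r > 0" "l * measure M (ball x r) < measure M (ball x r \<inter> E)" by auto
  obtain s where s: "0 < s" "s < r" "l * measure M (ball x r) < measure M (ball x s \<inter> E)"
    using measure_ball_inter_approx_from_below[OF E r] by blast
  define d where "d = (r - s) / 2"
  have "0 < d" using s by (simp add: d_def)
  have "ball x d \<subseteq> ?S"
  proof
    fix y assume "y \<in> ball x d"
    then have "dist x y + s \<le> s + d" "dist y x + (s + d) \<le> r"
      using dist_commute[of y x] d_def by simp_all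
    then have small: "ball x s \<subseteq> ball y (s + d)" and big: "ball y (s + d) \<subseteq> ball x r"
      by (simp_all add: ball_subset_ball_iff)
    have "l * measure M (ball y (s + d)) \<le> l * measure M (ball x r)"
      using big l by (intro mult_left_mono finite_measure_mono) (auto simp: sets_eq_borel)
    also have "\<dots> < measure M (ball x s \<inter> E)" by (rule s(3))
    also have "\<dots> \<le> measure M (ball y (s + d) \<inter> E)"
      using small E by (intro finite_measure_mono) (auto simp: sets_eq_borel)
    finally have "l * measure M (ball y (s + d)) < measure M (ball y (s + d) \<inter> E)" .
    moreover have "0 < s + d" using s(1) \<open>0 < d\<close> by simp
    ultimately show "y \<in> ?S" by (intro CollectI exI[of _ "s + d"] conjI)
  qed
  then show "\<exists>e>0. ball x e \<subseteq> ?S" using \<open>0 < d\<close> by blast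
qed

lemma null_sets_points_with_null_ball:
  "{x. \<exists>r>0. measure M (ball x r) = 0} \<in> null_sets M" (is "?Z \<in> _")
proof -
  have "open ?Z" unfolding open_contains_ball
  proof
    fix x assume "x \<in> ?Z"
    then obtain r where r: "r > 0" "measure M (ball x r) = 0" by auto
    have "ball x (r/2) \<subseteq> ?Z"
    proof
      fix y assume "y \<in> ball x (r/2)"
      then have "ball y (r/2) \<subseteq> ball x r" by (simp add: ball_subset_ball_iff dist_commute)
      then have "measure M (ball y (r/2)) \<le> measure M (ball x r)"
        by (intro finite_measure_mono) (auto simp: sets_eq_borel)
      then show "y \<in> ?Z" using r measure_nonneg[of M "ball y (r/2)"]
        by (intro CollectI exI[of _ "r/2"]) auto
    qed
    then show "\<exists>e>0. ball x e \<subseteq> ?Z" using r by (intro exI[of _ "r/2"]) auto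
  qed
  then have Z: "?Z \<in> sets borel" by auto
  \<comment> \<open>Every point of \<open>?Z\<close> sees the empty set with relative density \<open>1\<close>.\<close>
  have "1 * measure M ?Z \<le> 2 * measure M {}"
    by (rule maximal_inequality[OF _ Z]) auto
  then have "measure M ?Z = 0" using measure_nonneg[of M ?Z] by simp
  then show ?thesis using Z by (auto simp: null_sets_def emeasure_eq_measure sets_eq_borel)
qed

lemma compact_subset_measure_approx:
  assumes F: "F \<in> sets borel" and e: "e > 0"
  obtains K where "K \<subseteq> F" "compact K" "measure M (F - K) < e"
proof (cases "measure M F < e")
  case True
  then show ?thesis using that[of "{}"] by auto
next
  case False
  have "ennreal (measure M F - e) < emeasure M F"
    using False e by (simp add: emeasure_eq_measure ennreal_less_iff)
  then obtain K where K: "K \<subseteq> F" "compact K" "ennreal (measure M F - e) < emeasure M K"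
    using F by (auto simp: inner_regular[OF sets_eq_borel] less_SUP_iff)
  moreover have "measure M (F - K) = measure M F - measure M K"
    using K F by (intro finite_measure_Diff) (auto simp: sets_eq_borel borel_compact)
  ultimately show ?thesis
    using False by (intro that[of K]) (auto simp: emeasure_eq_measure ennreal_less_iff)
qed

lemma AE_relative_density_le_outside:
  assumes F: "F \<in> sets borel" and l: "l > 0"
  shows "AE x in M. x \<notin> F \<longrightarrow>
           (\<forall>\<^sub>F r in at_right 0. measure M (ball x r \<inter> F) \<le> l * measure M (ball x r))"
proof -
  have "\<exists>K. K \<subseteq> F \<and> compact K \<and> measure M (F - K) < inverse (real (Suc m))" for m
    by (rule compact_subset_measure_approx[OF F]) auto
  then obtain K where K: "\<And>m. K m \<subseteq> F" "\<And>m. compact (K m)"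
      "\<And>m. measure M (F - K m) < inverse (real (Suc m))"
    by metis
  have FK: "F - K m \<in> sets borel" for m using F K(2) by (auto intro: borel_compact)
  define S where "S m = {x. \<exists>r>0. l * measure M (ball x r) < measure M (ball x r \<inter> (F - K m))}" for m
  have S: "S m \<in> sets borel" for m
    unfolding S_def using l by (intro borel_open open_points_with_dense_ball[OF FK]) auto
  \<comment> \<open>The bad points lie in every \<open>S m\<close>, and the maximal inequality makes \<open>S m\<close> small.\<close>
  have bound: "l * measure M (\<Inter>m. S m) \<le> 2 * inverse (real (Suc m))" for m
  proof -
    have "l * measure M (\<Inter>m. S m) \<le> l * measure M (S m)"
      using S l by (intro mult_left_mono finite_measure_mono) (auto simp: sets_eq_borel)
    also have "\<dots> \<le> 2 * measure M (F - K m)"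
      using l by (intro maximal_inequality[OF FK S]) (auto simp: S_def)
    also have "\<dots> \<le> 2 * inverse (real (Suc m))" using K(3)[of m] by simp
    finally show ?thesis .
  qed
  have "(\<lambda>m. 2 * inverse (real (Suc m))) \<longlonglongrightarrow> 0"
    by (intro tendsto_mult_right_zero LIMSEQ_inverse_real_of_nat)
  then have "l * measure M (\<Inter>m. S m) \<le> 0"
    by (rule LIMSEQ_le_const) (use bound in blast)
  then have "measure M (\<Inter>m. S m) = 0" using l by (simp add: mult_le_0_iff measure_le_0_iff)
  then have "(\<Inter>m. S m) \<in> null_sets M"
    using S by (auto simp: null_sets_def emeasure_eq_measure sets_eq_borel)
  then have "AE x in M. x \<notin> (\<Inter>m. S m)" by (rule AE_not_in)
  then show ?thesis
  proof eventually_elim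
    case (elim x)
    then obtain m where m: "x \<notin> S m" by blast
    show ?case
    proof
      assume "x \<notin> F"
      then have "x \<in> - K m" using K(1) by blast
      moreover have "open (- K m)" using K(2) by (auto intro: compact_imp_closed)
      ultimately obtain \<delta> where \<delta>: "\<delta> > 0" "ball x \<delta> \<subseteq> - K m"
        unfolding open_contains_ball by blast
      have "ball x r \<inter> F = ball x r \<inter> (F - K m)" if "r < \<delta>" for r
        using \<delta>(2) subset_ball[of r \<delta> x] that by auto
      then have "\<forall>\<^sub>F r in at_right 0. ball x r \<inter> F = ball x r \<inter> (F - K m)"
        using \<delta>(1) unfolding eventually_at_right_field by blast
      moreover have "\<forall>r>0. \<not> l * measure M (ball x r) < measure M (ball x r \<inter> (F - K m))"
        using m by (simp add: S_def)
      then have "\<forall>\<^sub>F r in at_right 0. measure M (ball x r \<inter> (F - K m)) \<le> l * measure M (ball x r)"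
        by (intro eventually_mono[OF eventually_at_right_less]) (simp add: not_less)
      ultimately show "\<forall>\<^sub>F r in at_right 0. measure M (ball x r \<inter> F) \<le> l * measure M (ball x r)"
        by eventually_elim (simp only:)
    qed
  qed
qed

lemma AE_zero_density_outside:
  assumes F: "F \<in> sets borel"
  shows "AE x in M. x \<notin> F \<longrightarrow> zero_density_at M F x"
proof -
  have "AE x in M. \<forall>k. x \<notin> F \<longrightarrow> (\<forall>\<^sub>F r in at_right 0.
      measure M (ball x r \<inter> F) \<le> inverse (real (Suc k)) * measure M (ball x r))"
    using F by (intro AE_all_countable[THEN iffD2] allI AE_relative_density_le_outside) auto
  then show ?thesis
  proof eventually_elim
    case (elim x)
    show ?case unfolding zero_density_at_def
    proof (intro impI allI)
      fix l :: real assume "x \<notin> F" "l > 0"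
      then obtain k where k: "inverse (real (Suc k)) \<le> l"
        using reals_Archimedean less_imp_le by blast
      from elim \<open>x \<notin> F\<close> have "\<forall>\<^sub>F r in at_right 0.
          measure M (ball x r \<inter> F) \<le> inverse (real (Suc k)) * measure M (ball x r)" by blast
      then show "\<forall>\<^sub>F r in at_right 0. measure M (ball x r \<inter> F) \<le> l * measure M (ball x r)"
      proof eventually_elim
        case (elim r)
        also have "inverse (real (Suc k)) * measure M (ball x r) \<le> l * measure M (ball x r)"
          using k by (intro mult_right_mono) auto
        finally show ?case .
      qed
    qed
  qed
qed

end

definition fills_ball :: "real measure \<Rightarrow> real \<Rightarrow> real \<Rightarrow> real \<Rightarrow> real set \<Rightarrow> bool" where
  "fills_ball M c x \<rho> A \<longleftrightarrow>
     A \<in> sets borel \<and> A \<subseteq> ball x \<rho> \<and> 0 < \<rho> \<and> c * measure M (ball x \<rho>) \<le> measure M A"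

locale unit_density = finite_borel_measure M for M :: "real measure" +
  fixes a :: "real \<Rightarrow> real"
  assumes a_measurable [measurable]: "a \<in> borel_measurable borel"
    and a_nonneg: "\<And>y. 0 \<le> a y" and a_le_1: "\<And>y. a y \<le> 1"
begin

abbreviation P :: "real measure" where
  "P \<equiv> density M (\<lambda>y. ennreal (a y))"

lemma emeasure_P: "S \<in> sets borel \<Longrightarrow> emeasure P S = (\<integral>\<^sup>+y. ennreal (a y) * indicator S y \<partial>M)"
  by (rule emeasure_density) (auto simp: sets_eq_borel)

lemma emeasure_P_le: "S \<in> sets borel \<Longrightarrow> (\<And>y. y \<in> S \<Longrightarrow> a y \<le> q) \<Longrightarrow> emeasure P S \<le> q * emeasure M S"
  by (auto simp: emeasure_P sets_eq_borel indicator_def ennreal_leI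
      simp flip: nn_integral_cmult_indicator intro!: nn_integral_mono)

lemma emeasure_P_ge: "S \<in> sets borel \<Longrightarrow> (\<And>y. y \<in> S \<Longrightarrow> q \<le> a y) \<Longrightarrow> q * emeasure M S \<le> emeasure P S"
  by (auto simp: emeasure_P sets_eq_borel indicator_def ennreal_leI
      simp flip: nn_integral_cmult_indicator intro!: nn_integral_mono)

sublocale P: finite_measure P
proof
  have "emeasure P UNIV \<le> emeasure M UNIV"
    using emeasure_P_le[of UNIV 1] a_le_1 by simp
  then show "emeasure P (space P) \<noteq> \<infinity>"
    using sets_eq_imp_space_eq[OF sets_eq_borel] by (auto simp: top_unique)
qed

lemma measure_P_le:
  assumes "S \<in> sets borel" "\<And>y. y \<in> S \<Longrightarrow> a y \<le> q" "0 \<le> q"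
  shows "measure P S \<le> q * measure M S"
  using emeasure_P_le[OF assms(1,2)] assms(3)
  by (simp add: emeasure_eq_measure P.emeasure_eq_measure ennreal_mult'[symmetric])

lemma measure_P_ge:
  assumes "S \<in> sets borel" "\<And>y. y \<in> S \<Longrightarrow> q \<le> a y" "0 \<le> q"
  shows "q * measure M S \<le> measure P S"
  using emeasure_P_ge[OF assms(1,2)] assms(3)
  by (simp add: emeasure_eq_measure P.emeasure_eq_measure ennreal_mult'[symmetric])

end

context unit_density
begin

lemma ratio_ge_if_sparse_below:
  assumes A: "fills_ball M c x \<rho> A" and c: "0 < c" and ball: "0 < measure M (ball x \<rho>)"
    and q: "0 < q" "q \<le> 1" and l: "0 \<le> l"
    and sparse: "measure M (ball x \<rho> \<inter> {y. a y \<le> q}) \<le> l * measure M (ball x \<rho>)"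
  shows "q - l / c \<le> measure P A / measure M A"
proof -
  define F where "F = {y. a y \<le> q}"
  have F: "F \<in> sets borel" unfolding F_def by measurable
  have A': "A \<in> sets borel" "A \<subseteq> ball x \<rho>" "c * measure M (ball x \<rho>) \<le> measure M A"
    using A by (auto simp: fills_ball_def)
  define m where "m = measure M A"
  have m: "0 < m" unfolding m_def using A'(3) c ball by (smt (verit) mult_pos_pos)
  have ball_le: "measure M (ball x \<rho>) \<le> m / c"
    using A'(3) c unfolding m_def by (simp add: pos_le_divide_eq mult.commute)
  have "measure M (A \<inter> F) \<le> measure M (ball x \<rho> \<inter> F)"
    using A' F by (intro finite_measure_mono) (auto simp: sets_eq_borel)
  also have "\<dots> \<le> l * (m / c)"
    using sparse ball_le l unfolding F_def by (meson mult_left_mono order_trans)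
  finally have "m - l * (m / c) \<le> measure M (A - F)"
    using A' F by (simp add: m_def finite_measure_Diff' sets_eq_borel)
  then have "q * (m - l * (m / c)) \<le> q * measure M (A - F)" using q by simp
  also have "\<dots> \<le> measure P (A - F)"
    using A' F q by (intro measure_P_ge) (auto simp: F_def)
  also have "\<dots> \<le> measure P A"
    using A' F by (intro P.finite_measure_mono) (auto simp: sets_eq_borel)
  finally have "q * (m - l * (m / c)) \<le> measure P A" .
  moreover have "q * (l * (m / c)) \<le> l * (m / c)"
    using q l m c by (intro mult_left_le_one_le) auto
  ultimately have "(q - l / c) * m \<le> measure P A" by (simp add: algebra_simps)
  then show ?thesis using m unfolding m_def by (simp add: pos_le_divide_eq)
qed

lemma ratio_le_if_sparse_above:
  assumes A: "fills_ball M c x \<rho> A" and c: "0 < c" and ball: "0 < measure M (ball x \<rho>)"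
    and q: "0 \<le> q" and l: "0 \<le> l"
    and sparse: "measure M (ball x \<rho> \<inter> {y. q \<le> a y}) \<le> l * measure M (ball x \<rho>)"
  shows "measure P A / measure M A \<le> q + l / c"
proof -
  define G where "G = {y. q \<le> a y}"
  have G: "G \<in> sets borel" unfolding G_def by measurable
  have A': "A \<in> sets borel" "A \<subseteq> ball x \<rho>" "c * measure M (ball x \<rho>) \<le> measure M A"
    using A by (auto simp: fills_ball_def)
  define m where "m = measure M A"
  have m: "0 < m" unfolding m_def using A'(3) c ball by (smt (verit) mult_pos_pos)
  have ball_le: "measure M (ball x \<rho>) \<le> m / c"
    using A'(3) c unfolding m_def by (simp add: pos_le_divide_eq mult.commute)
  have "measure P (A \<inter> G) \<le> 1 * measure M (A \<inter> G)"
    using A' G a_le_1 by (intro measure_P_le) auto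
  also have "\<dots> \<le> measure M (ball x \<rho> \<inter> G)"
    using A' G by (simp, intro finite_measure_mono) (auto simp: sets_eq_borel)
  also have "\<dots> \<le> l * (m / c)"
    using sparse ball_le l unfolding G_def by (meson mult_left_mono order_trans)
  finally have "measure P (A \<inter> G) \<le> l * (m / c)" .
  moreover have "measure P (A - G) \<le> q * m"
  proof -
    have "measure P (A - G) \<le> q * measure M (A - G)"
      using A' G q by (intro measure_P_le) (auto simp: G_def)
    also have "\<dots> \<le> q * m"
      unfolding m_def using A' G q by (intro mult_left_mono finite_measure_mono) (auto simp: sets_eq_borel)
    finally show ?thesis .
  qed
  moreover have "measure P (A - G) = measure P A - measure P (A \<inter> G)"
    using A' G by (intro P.finite_measure_Diff') (auto simp: sets_eq_borel)
  ultimately have "measure P A \<le> (q + l / c) * m" using c by (simp add: algebra_simps)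
  then show ?thesis using m unfolding m_def by (simp add: pos_divide_le_eq)
qed

end

context unit_density
begin

lemma ratio_tendsto_at_regular_point:
  assumes pos: "\<And>r. r > 0 \<Longrightarrow> 0 < measure M (ball x r)"
    and below: "\<And>q. q \<in> \<rat> \<Longrightarrow> q < a x \<Longrightarrow> zero_density_at M {y. a y \<le> q} x"
    and above: "\<And>q. q \<in> \<rat> \<Longrightarrow> a x < q \<Longrightarrow> zero_density_at M {y. q \<le> a y} x"
    and c: "0 < c" and \<rho>: "\<rho> \<longlonglongrightarrow> 0" and A: "\<forall>\<^sub>F j in sequentially. fills_ball M c x (\<rho> j) (A j)"
  shows "(\<lambda>j. measure P (A j) / measure M (A j)) \<longlonglongrightarrow> a x"
proof -
  have "filterlim \<rho> (at_right 0) sequentially"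
    using A by (intro tendsto_imp_filterlim_at_right[OF \<rho>]) (auto elim: eventually_mono simp: fills_ball_def)
  then have along: "\<forall>\<^sub>F j in sequentially. Q (\<rho> j)" if "\<forall>\<^sub>F r in at_right 0. Q r" for Q
    using that filterlim_iff by blast
  show ?thesis
  proof (rule order_tendstoI)
    fix y assume "y < a x"
    then obtain q where q: "q \<in> \<rat>" "y < q" "q < a x" using Rats_dense_in_real by blast
    show "\<forall>\<^sub>F j in sequentially. y < measure P (A j) / measure M (A j)"
    proof (cases "q \<le> 0")
      case True
      then have "y < 0" using q by simp
      then show ?thesis by (intro always_eventually allI less_le_trans[OF \<open>y < 0\<close>]) simp
    next
      case False
      define l where "l = c * (q - y) / 2"
      have l: "0 < l" "l / c = (q - y) / 2" using c q by (simp_all add: l_def)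
      then have "\<forall>\<^sub>F j in sequentially.
          measure M (ball x (\<rho> j) \<inter> {y. a y \<le> q}) \<le> l * measure M (ball x (\<rho> j))"
        using below[OF q(1,3)] by (intro along) (simp add: zero_density_at_def)
      with A show ?thesis
      proof eventually_elim
        case (elim j)
        then have "q - l / c \<le> measure P (A j) / measure M (A j)"
          using c pos False q a_le_1[of x] l
          by (intro ratio_ge_if_sparse_below[of c x "\<rho> j"]) (auto simp: fills_ball_def)
        from this[unfolded l(2)] show ?case using q by argo
      qed
    qed
  next
    fix y assume "a x < y"
    then obtain q where q: "q \<in> \<rat>" "a x < q" "q < y" using Rats_dense_in_real by blast
    define l where "l = c * (y - q) / 2"
    have l: "0 < l" "l / c = (y - q) / 2" using c q by (simp_all add: l_def)
    then have "\<forall>\<^sub>F j in sequentially.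
        measure M (ball x (\<rho> j) \<inter> {y. q \<le> a y}) \<le> l * measure M (ball x (\<rho> j))"
      using above[OF q(1,2)] by (intro along) (simp add: zero_density_at_def)
    with A show "\<forall>\<^sub>F j in sequentially. measure P (A j) / measure M (A j) < y"
    proof eventually_elim
      case (elim j)
      then have "measure P (A j) / measure M (A j) \<le> q + l / c"
        using c pos q a_nonneg[of x] l
        by (intro ratio_le_if_sparse_above[of c x "\<rho> j"]) (auto simp: fills_ball_def)
      from this[unfolded l(2)] show ?case using q by argo
    qed
  qed
qed

theorem AE_ratio_tendsto:
  "AE x in M. (\<forall>r>0. 0 < measure M (ball x r)) \<and>
     (\<forall>c \<rho> A. 0 < c \<longrightarrow> \<rho> \<longlonglongrightarrow> 0 \<longrightarrow> (\<forall>\<^sub>F j in sequentially. fills_ball M c x (\<rho> j) (A j)) \<longrightarrow>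
        (\<lambda>j. measure P (A j) / measure M (A j)) \<longlonglongrightarrow> a x)"
proof -
  have "AE x in M. x \<notin> {x. \<exists>r>0. measure M (ball x r) = 0}"
    by (rule AE_not_in[OF null_sets_points_with_null_ball])
  moreover have "AE x in M. \<forall>q\<in>\<rat>. q < a x \<longrightarrow> zero_density_at M {y. a y \<le> q} x"
    using AE_zero_density_outside[of "{y. a y \<le> _}"]
    by (subst AE_ball_countable[OF countable_rat]) (auto simp: not_le)
  moreover have "AE x in M. \<forall>q\<in>\<rat>. a x < q \<longrightarrow> zero_density_at M {y. q \<le> a y} x"
    using AE_zero_density_outside[of "{y. _ \<le> a y}"]
    by (subst AE_ball_countable[OF countable_rat]) (auto simp: not_le)
  ultimately show ?thesis
  proof eventually_elim
    case (elim x)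
    then have "\<And>r. r > 0 \<Longrightarrow> 0 < measure M (ball x r)"
      by (auto simp: less_le)
    with elim show ?case by (blast intro: ratio_tendsto_at_regular_point)
  qed
qed

end

definition add_measure :: "'a measure \<Rightarrow> 'a measure \<Rightarrow> 'a measure" where
  "add_measure M N = measure_of (space M) (sets M) (\<lambda>A. emeasure M A + emeasure N A)"

lemma sets_add_measure [simp, measurable_cong]: "sets (add_measure M N) = sets M"
  unfolding add_measure_def by (rule sets.sets_measure_of_eq)

lemma space_add_measure [simp]: "space (add_measure M N) = space M"
  unfolding add_measure_def by (rule sets.space_measure_of_eq)

lemma emeasure_add_measure:
  assumes N: "sets N = sets M" and A: "A \<in> sets M"
  shows "emeasure (add_measure M N) A = emeasure M A + emeasure N A"
  unfolding add_measure_def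
proof (rule emeasure_measure_of_sigma[OF sets.sigma_algebra_axioms _ _ A])
  show "positive (sets M) (\<lambda>A. emeasure M A + emeasure N A)"
    by (simp add: positive_def)
  show "countably_additive (sets M) (\<lambda>A. emeasure M A + emeasure N A)"
    unfolding countably_additive_def
  proof (intro allI impI)
    fix F :: "nat \<Rightarrow> _" assume F: "range F \<subseteq> sets M" "disjoint_family F"
    then show "(\<Sum>i. emeasure M (F i) + emeasure N (F i)) = emeasure M (\<Union>(range F)) + emeasure N (\<Union>(range F))"
      using N by (simp add: suminf_add[symmetric] suminf_emeasure)
  qed
qed

lemma null_sets_add_measure:
  assumes "sets N = sets M"
  shows "null_sets (add_measure M N) = null_sets M \<inter> null_sets N"
  using assms by (auto simp: null_sets_def emeasure_add_measure)

lemma borel_subset_in_borel_on: "S \<in> sets borel \<Longrightarrow> S \<subseteq> I \<Longrightarrow> S \<in> sets (borel_on I)"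
  by (auto simp: sets_restrict_space image_iff intro!: bexI[of _ S])

lemma open_compact_exhaustion:
  fixes I :: "'a::euclidean_space set"
  assumes "open I"
  obtains C :: "nat \<Rightarrow> 'a set"
  where "\<And>n. compact (C n)" "\<And>n. C n \<subseteq> I" "\<And>x. x \<in> I \<Longrightarrow> \<exists>n. \<exists>\<delta>>0. ball x \<delta> \<subseteq> C n"
proof (rule open_Union_compact_subsets[OF assms])
  fix C
  assume C: "\<And>n. compact (C n)" "\<And>n. C n \<subseteq> I" "\<And>n. C n \<subseteq> interior (C (Suc n))"
    "\<Union>(range C) = I"
  have nbhd: "\<exists>n. \<exists>\<delta>>0. ball x \<delta> \<subseteq> C n" if x: "x \<in> I" for x
  proof -
    obtain n where "x \<in> C n" using C(4) x by blast
    then have "x \<in> interior (C (Suc n))" using C(3) by blast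
    then obtain \<delta> where "\<delta> > 0" "ball x \<delta> \<subseteq> interior (C (Suc n))"
      using open_interior open_contains_ball by blast
    then show ?thesis using interior_subset by blast
  qed
  show thesis by (rule that[OF C(1,2) nbhd])
qed

lemma sigma_finite_measure_if_locally_finite_on:
  assumes I: "open I" and G: "locally_finite_on I G"
  shows "sigma_finite_measure G"
proof
  obtain C :: "nat \<Rightarrow> real set" where C: "\<And>n. compact (C n)" "\<And>n. C n \<subseteq> I"
      "\<And>x. x \<in> I \<Longrightarrow> \<exists>n. \<exists>\<delta>>0. ball x \<delta> \<subseteq> C n"
    using open_compact_exhaustion[OF I] by blast
  have sets_G: "sets G = sets (borel_on I)" using G by (simp add: locally_finite_on_def)
  have "range C \<subseteq> sets G"
    using C(1,2) by (auto simp: sets_G intro!: borel_subset_in_borel_on borel_compact)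
  moreover have "\<Union>(range C) = space G"
  proof -
    have "\<Union>(range C) = I" using C(2,3) by fastforce
    then show ?thesis using sets_eq_imp_space_eq[OF sets_G] by (simp add: space_restrict_space)
  qed
  moreover have "\<forall>K\<in>range C. emeasure G K \<noteq> \<infinity>"
    using G C(1,2) by (auto simp: locally_finite_on_def less_top[symmetric])
  ultimately show "\<exists>A. countable A \<and> A \<subseteq> sets G \<and> \<Union>A = space G \<and> (\<forall>a\<in>A. emeasure G a \<noteq> \<infinity>)"
    by (intro exI[of _ "range C"]) auto
qed

lemma locally_finite_on_add_measure:
  assumes I: "open I" and \<mu>: "locally_finite_on I \<mu>" and \<nu>: "locally_finite_on I \<nu>"
  shows "locally_finite_on I (add_measure \<mu> \<nu>)"
  unfolding locally_finite_on_def
proof (intro conjI allI impI)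
  have sets: "sets \<mu> = sets (borel_on I)" "sets \<nu> = sets (borel_on I)"
    using \<mu> \<nu> by (simp_all add: locally_finite_on_def)
  then show "sets (add_measure \<mu> \<nu>) = sets (borel_on I)" by simp
  fix K assume K: "compact K \<and> K \<subseteq> I"
  then have "K \<in> sets \<mu>" by (auto simp: sets intro: borel_subset_in_borel_on borel_compact)
  then show "emeasure (add_measure \<mu> \<nu>) K < \<infinity>"
    using \<mu> \<nu> K sets by (simp add: emeasure_add_measure locally_finite_on_def)
qed

definition localized :: "real measure \<Rightarrow> real set \<Rightarrow> real measure" where
  "localized G K = density (distr G borel (\<lambda>x. x)) (indicator K)"

lemma sets_localized [simp, measurable_cong]: "sets (localized G K) = sets borel"
  by (simp add: localized_def)

lemma measurable_ident_borel_on: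
  assumes "sets G = sets (borel_on I)"
  shows "(\<lambda>x. x) \<in> measurable G borel"
proof -
  have "(\<lambda>x. x) \<in> measurable (borel_on I) borel"
    by (intro measurable_restrict_space1 measurable_ident_sets) simp
  then show ?thesis by (simp add: measurable_cong_sets[OF assms refl])
qed

lemma emeasure_localized:
  assumes G: "sets G = sets (borel_on I)" and K: "K \<in> sets borel" "K \<subseteq> I" and S: "S \<in> sets borel"
  shows "emeasure (localized G K) S = emeasure G (K \<inter> S)"
proof -
  have "emeasure (localized G K) S = emeasure (distr G borel (\<lambda>x. x)) (K \<inter> S)"
    unfolding localized_def using K S by (intro emeasure_restricted) auto
  also have "\<dots> = emeasure G ((\<lambda>x. x) -` (K \<inter> S) \<inter> space G)"
    using K S by (intro emeasure_distr measurable_ident_borel_on[OF G]) auto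
  also have "(\<lambda>x. x) -` (K \<inter> S) \<inter> space G = K \<inter> S"
    using sets_eq_imp_space_eq[OF G] K(2) by (auto simp: space_restrict_space)
  finally show ?thesis .
qed

lemma measure_localized:
  assumes "sets G = sets (borel_on I)" "K \<in> sets borel" "K \<subseteq> I" "S \<in> sets borel" "S \<subseteq> K"
  shows "measure (localized G K) S = measure G S"
  using emeasure_localized[OF assms(1-4)] assms(5) by (simp add: measure_def Int_absorb1)

lemma localized_density:
  assumes G: "sets G = sets (borel_on I)" and K: "K \<in> sets borel" "K \<subseteq> I"
    and f [measurable]: "f \<in> borel_measurable borel"
  shows "localized (density G f) K = density (localized G K) f"
proof (rule measure_eqI)
  fix S assume "S \<in> sets (localized (density G f) K)"
  then have S [measurable]: "S \<in> sets borel" by simp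
  have id: "(\<lambda>x. x) \<in> measurable G borel" by (rule measurable_ident_borel_on[OF G])
  have f_G: "f \<in> borel_measurable G"
    using measurable_comp[OF id f] by (simp add: comp_def)
  have "emeasure (localized (density G f) K) S = emeasure (density G f) (K \<inter> S)"
    using G K by (intro emeasure_localized) auto
  also have "\<dots> = (\<integral>\<^sup>+x. f x * indicator (K \<inter> S) x \<partial>G)"
    using K G f_G by (intro emeasure_density) (auto intro: borel_subset_in_borel_on)
  also have "\<dots> = (\<integral>\<^sup>+x. indicator K x * (f x * indicator S x) \<partial>distr G borel (\<lambda>x. x))"
    using id K by (subst nn_integral_distr) (auto simp: indicator_inter_arith ac_simps)
  also have "\<dots> = (\<integral>\<^sup>+x. f x * indicator S x \<partial>localized G K)"
    unfolding localized_def using K by (intro nn_integral_density[symmetric]) auto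
  also have "\<dots> = emeasure (density (localized G K) f) S"
    by (intro emeasure_density[symmetric]) auto
  finally show "emeasure (localized (density G f) K) S = emeasure (density (localized G K) f) S" .
qed simp

lemma density_RN_deriv_add_measure:
  assumes "sigma_finite_measure \<gamma>" and sets: "sets \<mu> = sets \<gamma>" "sets \<nu> = sets \<gamma>"
    and ac: "absolutely_continuous \<gamma> \<mu>" "absolutely_continuous \<gamma> \<nu>"
  shows "add_measure \<mu> \<nu> = density \<gamma> (\<lambda>x. RN_deriv \<gamma> \<mu> x + RN_deriv \<gamma> \<nu> x)"
proof (rule measure_eqI)
  interpret sigma_finite_measure \<gamma> by fact
  fix A assume "A \<in> sets (add_measure \<mu> \<nu>)"
  then have A: "A \<in> sets \<gamma>" using sets by simp
  have "emeasure (add_measure \<mu> \<nu>) A = emeasure (density \<gamma> (RN_deriv \<gamma> \<mu>)) A + emeasure (density \<gamma> (RN_deriv \<gamma> \<nu>)) A"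
    using A sets ac by (simp add: emeasure_add_measure density_RN_deriv)
  also have "\<dots> = emeasure (density \<gamma> (\<lambda>x. RN_deriv \<gamma> \<mu> x + RN_deriv \<gamma> \<nu> x)) A"
    using A by (intro emeasure_density_add) auto
  finally show "emeasure (add_measure \<mu> \<nu>) A = emeasure (density \<gamma> (\<lambda>x. RN_deriv \<gamma> \<mu> x + RN_deriv \<gamma> \<nu> x)) A" .
qed (use sets in simp)

lemma RN_deriv_density_divide:
  assumes "sigma_finite_measure \<Gamma>" and \<Gamma>: "\<Gamma> = density M w" and N: "N = density M u"
    and [measurable]: "u \<in> borel_measurable M" "w \<in> borel_measurable M"
    and ae: "AE x in M. u x \<le> w x \<and> w x \<noteq> \<infinity>"
  shows "AE x in \<Gamma>. RN_deriv \<Gamma> N x = u x / w x"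
proof -
  interpret sigma_finite_measure \<Gamma> by fact
  have sets_\<Gamma>: "sets \<Gamma> = sets M" using \<Gamma> by simp
  have meas: "(\<lambda>x. u x / w x) \<in> borel_measurable \<Gamma>"
    unfolding measurable_cong_sets[OF sets_\<Gamma> refl] by measurable
  have "density \<Gamma> (\<lambda>x. u x / w x) = density M (\<lambda>x. w x * (u x / w x))"
    unfolding \<Gamma> by (rule density_density_eq) auto
  also have "\<dots> = N"
    unfolding N
  proof (rule density_cong)
    show "AE x in M. w x * (u x / w x) = u x"
      using ae by eventually_elim (simp add: ennreal_mult_divide_cancel)
  qed auto
  finally have "AE x in \<Gamma>. u x / w x = RN_deriv \<Gamma> N x"
    by (rule RN_deriv_unique[OF meas])
  then show ?thesis by (rule eventually_mono) simp
qed

lemma gen_RN_deriv_RN_deriv_add_measure: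
  assumes sets: "sets \<mu> = sets (borel_on I)" "sets \<nu> = sets (borel_on I)"
    and \<sigma>: "sigma_finite_measure \<mu>" "sigma_finite_measure \<nu>" "sigma_finite_measure (add_measure \<mu> \<nu>)"
  shows "gen_RN_deriv I \<mu> \<nu>
           (\<lambda>x. RN_deriv (add_measure \<mu> \<nu>) \<mu> x / RN_deriv (add_measure \<mu> \<nu>) \<nu> x)"
  unfolding gen_RN_deriv_def
proof (intro conjI allI impI)
  let ?\<gamma> = "add_measure \<mu> \<nu>"
  have sets_\<gamma>: "sets ?\<gamma> = sets (borel_on I)" using sets by simp
  have "(\<lambda>x. RN_deriv ?\<gamma> \<mu> x / RN_deriv ?\<gamma> \<nu> x) \<in> borel_measurable ?\<gamma>"
    by (intro borel_measurable_divide_ennreal borel_measurable_RN_deriv)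
  then show "(\<lambda>x. RN_deriv ?\<gamma> \<mu> x / RN_deriv ?\<gamma> \<nu> x) \<in> borel_measurable (borel_on I)"
    by (simp add: measurable_cong_sets[OF sets_\<gamma> refl])
  fix \<gamma>' assume "sigma_finite_measure \<gamma>' \<and> sets \<gamma>' = sets (borel_on I) \<and>
      absolutely_continuous \<gamma>' \<mu> \<and> absolutely_continuous \<gamma>' \<nu>"
  then have \<gamma>': "sigma_finite_measure \<gamma>'" "sets \<gamma>' = sets (borel_on I)"
    and ac: "absolutely_continuous \<gamma>' \<mu>" "absolutely_continuous \<gamma>' \<nu>" by auto
  interpret \<gamma>': sigma_finite_measure \<gamma>' by fact
  define u v where "u = RN_deriv \<gamma>' \<mu>" and "v = RN_deriv \<gamma>' \<nu>"
  have u [measurable]: "u \<in> borel_measurable \<gamma>'" and v [measurable]: "v \<in> borel_measurable \<gamma>'"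
    unfolding u_def v_def by (rule borel_measurable_RN_deriv)+
  have sets': "sets \<mu> = sets \<gamma>'" "sets \<nu> = sets \<gamma>'" using sets \<gamma>'(2) by simp_all
  have \<mu>: "\<mu> = density \<gamma>' u" and \<nu>: "\<nu> = density \<gamma>' v"
    unfolding u_def v_def using ac sets' by (simp_all only: \<gamma>'.density_RN_deriv)
  have \<gamma>: "?\<gamma> = density \<gamma>' (\<lambda>x. u x + v x)"
    unfolding u_def v_def by (rule density_RN_deriv_add_measure[OF \<gamma>'(1) sets' ac])
  have "AE x in \<gamma>'. u x \<noteq> \<infinity>"
    unfolding u_def by (rule \<gamma>'.RN_deriv_finite[OF \<sigma>(1) ac(1) sets'(1)])
  moreover have "AE x in \<gamma>'. v x \<noteq> \<infinity>"
    unfolding v_def by (rule \<gamma>'.RN_deriv_finite[OF \<sigma>(2) ac(2) sets'(2)])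
  ultimately have fin: "AE x in \<gamma>'. u x \<noteq> \<infinity> \<and> v x \<noteq> \<infinity>" by eventually_elim (rule conjI)
  have w [measurable]: "(\<lambda>x. u x + v x) \<in> borel_measurable \<gamma>'" by measurable
  have "AE x in \<gamma>'. u x \<le> u x + v x \<and> u x + v x \<noteq> \<infinity>"
    using fin by eventually_elim auto
  then have "AE x in ?\<gamma>. RN_deriv ?\<gamma> \<mu> x = u x / (u x + v x)"
    by (rule RN_deriv_density_divide[OF \<sigma>(3) \<gamma> \<mu> u w])
  moreover have "AE x in \<gamma>'. v x \<le> u x + v x \<and> u x + v x \<noteq> \<infinity>"
    using fin by eventually_elim auto
  then have "AE x in ?\<gamma>. RN_deriv ?\<gamma> \<nu> x = v x / (u x + v x)"
    by (rule RN_deriv_density_divide[OF \<sigma>(3) \<gamma> \<nu> v w])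
  moreover have "AE x in density \<gamma>' (\<lambda>x. u x + v x). 0 < u x + v x \<and> u x \<noteq> \<infinity> \<and> v x \<noteq> \<infinity>"
    unfolding AE_density[OF w] using fin by eventually_elim blast
  then have "AE x in ?\<gamma>. 0 < u x + v x \<and> u x \<noteq> \<infinity> \<and> v x \<noteq> \<infinity>"
    by (simp only: \<gamma>)
  ultimately have "AE x in ?\<gamma>. RN_deriv ?\<gamma> \<mu> x / RN_deriv ?\<gamma> \<nu> x = u x / v x"
  proof eventually_elim
    case (elim x)
    then have "RN_deriv ?\<gamma> \<mu> x / RN_deriv ?\<gamma> \<nu> x = (u x / (u x + v x)) / (v x / (u x + v x))"
      by (simp only:)
    also have "\<dots> = u x / v x"
      using elim(3) by (intro ennreal_divide_divide_cancel) auto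
    finally show ?case .
  qed
  then obtain N where N: "{x \<in> space ?\<gamma>. \<not> RN_deriv ?\<gamma> \<mu> x / RN_deriv ?\<gamma> \<nu> x = u x / v x} \<subseteq> N"
      "emeasure ?\<gamma> N = 0" "N \<in> sets ?\<gamma>"
    by (rule AE_E)
  have "N \<in> null_sets ?\<gamma>" using N(2,3) by auto
  then have null: "N \<in> null_sets \<mu> \<inter> null_sets \<nu>"
    using sets by (simp add: null_sets_add_measure)
  have "space ?\<gamma> = I" using sets_eq_imp_space_eq[OF sets_\<gamma>] by (simp add: space_restrict_space)
  then have "\<forall>x\<in>I - N. RN_deriv ?\<gamma> \<mu> x / RN_deriv ?\<gamma> \<nu> x = u x / v x"
    using N(1) by blast
  with null show "\<exists>N\<in>null_sets \<mu> \<inter> null_sets \<nu>. \<forall>x\<in>I - N.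
      RN_deriv ?\<gamma> \<mu> x / RN_deriv ?\<gamma> \<nu> x = RN_deriv \<gamma>' \<mu> x / RN_deriv \<gamma>' \<nu> x"
    unfolding u_def v_def by (intro bexI[of _ N])
qed

lemma sets_borel_on_iff:
  assumes "open I"
  shows "S \<in> sets (borel_on I) \<longleftrightarrow> S \<in> sets borel \<and> S \<subseteq> I"
  using assms by (subst sets_restrict_space_iff) auto

lemma Dsym_if_Dbar:
  assumes I: "open I" "x \<in> I" and D: "Dbar \<mu> \<nu> I x z"
  shows "Dsym \<mu> \<nu> x z"
proof -
  obtain \<delta> where \<delta>: "\<delta> > 0" "ball x \<delta> \<subseteq> I" using I open_contains_ball by blast
  show ?thesis unfolding Dsym_def
  proof (rule tendsto_at_right_sequentially[OF \<delta>(1)])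
    fix S :: "nat \<Rightarrow> real" assume S: "\<And>n. 0 < S n" "\<And>n. S n < \<delta>" "decseq S" "S \<longlonglongrightarrow> 0"
    have sub: "ball x (S n) \<subseteq> I" for n
      using \<delta>(2) subset_ball[of "S n" \<delta> x] S(2)[of n] by simp
    have "mm_converges G I (\<lambda>n. ball x (S n)) x" for G :: "real measure"
      unfolding mm_converges_def using S(1,4) sub
      by (intro conjI allI exI[of _ S] exI[of _ "1::real"])
        (auto intro: borel_subset_in_borel_on[OF borel_open[OF open_ball]])
    then show "(\<lambda>n. emeasure \<mu> (ball x (S n)) / emeasure \<nu> (ball x (S n))) \<longlonglongrightarrow> z"
      using D unfolding Dbar_def by blast
  qed
qed

lemma mm_converges_add_measure:
  assumes I: "open I" and sets: "sets \<mu> = sets (borel_on I)" "sets \<nu> = sets (borel_on I)"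
    and A: "mm_converges \<mu> I A x" "mm_converges \<nu> I A x"
  obtains \<rho> c where "\<rho> \<longlonglongrightarrow> 0" "0 < c" "\<And>j. 0 < \<rho> j" "\<And>j. A j \<subseteq> ball x (\<rho> j)"
    "\<And>j. ennreal c * emeasure (add_measure \<mu> \<nu>) (ball x (\<rho> j)) \<le> emeasure (add_measure \<mu> \<nu>) (A j)"
proof -
  obtain r1 \<alpha>1 where r1: "\<forall>j. 0 < r1 j \<and> A j \<subseteq> ball x (r1 j) \<and> ball x (r1 j) \<subseteq> I" "r1 \<longlonglongrightarrow> 0"
    and \<alpha>1: "0 < \<alpha>1" "\<forall>j. ennreal \<alpha>1 * emeasure \<mu> (ball x (r1 j)) \<le> emeasure \<mu> (A j)"
    using A(1) unfolding mm_converges_def by blast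
  obtain r2 \<alpha>2 where r2: "\<forall>j. 0 < r2 j \<and> A j \<subseteq> ball x (r2 j) \<and> ball x (r2 j) \<subseteq> I" "r2 \<longlonglongrightarrow> 0"
    and \<alpha>2: "0 < \<alpha>2" "\<forall>j. ennreal \<alpha>2 * emeasure \<nu> (ball x (r2 j)) \<le> emeasure \<nu> (A j)"
    using A(2) unfolding mm_converges_def by blast
  define \<rho> where "\<rho> j = min (r1 j) (r2 j)" for j
  define c where "c = min \<alpha>1 \<alpha>2"
  have A_sets: "A j \<in> sets \<mu>" for j using A(1) sets by (simp add: mm_converges_def)
  have "ennreal c * emeasure (add_measure \<mu> \<nu>) (ball x (\<rho> j)) \<le> emeasure (add_measure \<mu> \<nu>) (A j)" for j
  proof -
    have "ball x (\<rho> j) \<subseteq> ball x (r1 j)" by (simp add: \<rho>_def subset_ball)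
    then have balls: "ball x (r1 j) \<in> sets \<mu>" "ball x (r2 j) \<in> sets \<nu>" "ball x (\<rho> j) \<in> sets \<mu>"
      using r1(1) r2(1) sets by (auto intro!: borel_subset_in_borel_on[OF borel_open[OF open_ball]])
    have "ennreal c * emeasure (add_measure \<mu> \<nu>) (ball x (\<rho> j))
        = ennreal c * emeasure \<mu> (ball x (\<rho> j)) + ennreal c * emeasure \<nu> (ball x (\<rho> j))"
      using balls sets by (simp add: emeasure_add_measure distrib_left)
    also have "\<dots> \<le> ennreal \<alpha>1 * emeasure \<mu> (ball x (r1 j)) + ennreal \<alpha>2 * emeasure \<nu> (ball x (r2 j))"
      using balls by (intro add_mono mult_mono emeasure_mono ennreal_leI)
        (auto simp: c_def \<rho>_def subset_ball)
    also have "\<dots> \<le> emeasure \<mu> (A j) + emeasure \<nu> (A j)" using \<alpha>1(2) \<alpha>2(2) by (intro add_mono) auto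
    also have "\<dots> = emeasure (add_measure \<mu> \<nu>) (A j)"
      using A_sets sets by (simp add: emeasure_add_measure)
    finally show ?thesis .
  qed
  moreover have "\<rho> \<longlonglongrightarrow> 0" unfolding \<rho>_def using tendsto_min[OF r1(2) r2(2)] by simp
  moreover have "0 < c" using \<alpha>1 \<alpha>2 by (simp add: c_def)
  moreover have "0 < \<rho> j" for j using r1(1) r2(1) by (simp add: \<rho>_def)
  moreover have "A j \<subseteq> ball x (\<rho> j)" for j
  proof -
    have "A j \<subseteq> ball x (r1 j) \<inter> ball x (r2 j)" using r1(1) r2(1) by blast
    also have "\<dots> = ball x (\<rho> j)" by (auto simp: \<rho>_def)
    finally show ?thesis .
  qed
  ultimately show ?thesis using that by blast
qed

lemma emeasure_divide_eq_odds:
  assumes sets: "sets \<nu> = sets \<mu>" and A: "A \<in> sets \<mu>"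
    and fin: "emeasure (add_measure \<mu> \<nu>) A \<noteq> \<infinity>" and pos: "0 < measure (add_measure \<mu> \<nu>) A"
  defines "t \<equiv> measure \<mu> A / measure (add_measure \<mu> \<nu>) A"
  shows "emeasure \<mu> A / emeasure \<nu> A = ennreal t / ennreal (1 - t)" and "0 \<le> t" "t \<le> 1"
proof -
  have sum: "emeasure (add_measure \<mu> \<nu>) A = emeasure \<mu> A + emeasure \<nu> A"
    using sets A by (rule emeasure_add_measure)
  then have "emeasure \<mu> A = ennreal (measure \<mu> A)" "emeasure \<nu> A = ennreal (measure \<nu> A)"
    using fin by (simp_all add: emeasure_eq_ennreal_measure)
  moreover have "measure (add_measure \<mu> \<nu>) A = measure \<mu> A + measure \<nu> A"
    using sum fin by (simp add: measure_def enn2real_plus less_top)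
  ultimately show "emeasure \<mu> A / emeasure \<nu> A = ennreal t / ennreal (1 - t)" "0 \<le> t" "t \<le> 1"
    using pos unfolding t_def by (simp_all add: ennreal_odds_eq_divide)
qed

lemma Dbar_if_localized_ratio_tendsto:
  fixes \<mu> \<nu> :: "real measure"
  assumes I: "open I" and sets: "sets \<mu> = sets (borel_on I)" "sets \<nu> = sets (borel_on I)"
    and K: "compact K" "K \<subseteq> I" "emeasure (add_measure \<mu> \<nu>) K \<noteq> \<infinity>"
    and \<delta>: "0 < \<delta>" "ball x \<delta> \<subseteq> K"
    and pos: "\<And>r. r > 0 \<Longrightarrow> 0 < measure (localized (add_measure \<mu> \<nu>) K) (ball x r)"
    and lim: "\<And>c \<rho> A. 0 < c \<Longrightarrow> \<rho> \<longlonglongrightarrow> 0 \<Longrightarrow>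
      (\<forall>\<^sub>F j in sequentially. fills_ball (localized (add_measure \<mu> \<nu>) K) c x (\<rho> j) (A j)) \<Longrightarrow>
      (\<lambda>j. measure (localized \<mu> K) (A j) / measure (localized (add_measure \<mu> \<nu>) K) (A j)) \<longlonglongrightarrow> t"
    and t: "0 \<le> t" "t \<le> 1"
  shows "Dbar \<mu> \<nu> I x (ennreal t / ennreal (1 - t))"
  unfolding Dbar_def
proof (intro allI impI)
  let ?\<gamma> = "add_measure \<mu> \<nu>"
  have sets_\<gamma>: "sets ?\<gamma> = sets (borel_on I)" using sets by simp
  have K_borel: "K \<in> sets borel" using K(1) by (rule borel_compact)
  fix A assume "mm_converges \<mu> I A x \<and> mm_converges \<nu> I A x"
  then have mm: "mm_converges \<mu> I A x" "mm_converges \<nu> I A x" by auto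
  obtain \<rho> c where \<rho>: "\<rho> \<longlonglongrightarrow> 0" "0 < c" "\<And>j. 0 < \<rho> j" "\<And>j. A j \<subseteq> ball x (\<rho> j)"
    and fill: "\<And>j. ennreal c * emeasure ?\<gamma> (ball x (\<rho> j)) \<le> emeasure ?\<gamma> (A j)"
    using mm_converges_add_measure[OF I sets mm] by blast
  have A_borel: "A j \<in> sets borel" for j
    using mm(1) I by (simp add: mm_converges_def sets_borel_on_iff)
  define T where "T j = measure (localized \<mu> K) (A j) / measure (localized ?\<gamma> K) (A j)" for j
  have local: "measure (localized G K) S = measure G S"
    if "sets G = sets (borel_on I)" "S \<in> sets borel" "S \<subseteq> K" for G S
    using that K_borel K(2) by (intro measure_localized) auto
  have ev: "\<forall>\<^sub>F j in sequentially. fills_ball (localized ?\<gamma> K) c x (\<rho> j) (A j) \<and>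
      emeasure \<mu> (A j) / emeasure \<nu> (A j) = ennreal (T j) / ennreal (1 - T j) \<and> 0 \<le> T j \<and> T j \<le> 1"
    using order_tendstoD(2)[OF \<rho>(1) \<delta>(1)]
  proof eventually_elim
    case (elim j)
    have ball_K: "ball x (\<rho> j) \<subseteq> K" using \<delta>(2) subset_ball[of "\<rho> j" \<delta> x] elim by auto
    then have A_K: "A j \<subseteq> K" using \<rho>(4) by blast
    have finite: "emeasure ?\<gamma> S \<noteq> \<infinity>" if "S \<subseteq> K" "S \<in> sets borel" for S
    proof -
      have "emeasure ?\<gamma> S \<le> emeasure ?\<gamma> K"
        using that K_borel K(2) sets_\<gamma> by (intro emeasure_mono) (auto intro: borel_subset_in_borel_on)
      then show ?thesis using K(3) by (auto simp: top_unique)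
    qed
    have "ennreal (c * measure ?\<gamma> (ball x (\<rho> j))) \<le> ennreal (measure ?\<gamma> (A j))"
      using fill[of j] finite[OF ball_K] finite[OF A_K A_borel] \<rho>(2)
      by (simp add: ennreal_mult emeasure_eq_ennreal_measure)
    then have c_fill: "c * measure ?\<gamma> (ball x (\<rho> j)) \<le> measure ?\<gamma> (A j)"
      by (simp add: ennreal_le_iff)
    then have fills: "fills_ball (localized ?\<gamma> K) c x (\<rho> j) (A j)"
      using A_borel \<rho>(3,4) ball_K A_K sets_\<gamma> by (simp add: fills_ball_def local)
    have "0 < measure ?\<gamma> (ball x (\<rho> j))"
      using pos[OF \<rho>(3)[of j]] local[OF sets_\<gamma> borel_open[OF open_ball] ball_K] by simp
    then have A_pos: "0 < measure ?\<gamma> (A j)"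
      using c_fill \<rho>(2) by (smt (verit) mult_pos_pos)
    have T_eq: "T j = measure \<mu> (A j) / measure ?\<gamma> (A j)"
      using A_borel A_K sets sets_\<gamma> by (simp add: T_def local)
    have "A j \<in> sets \<mu>"
      using A_borel A_K K(2) sets by (auto intro: borel_subset_in_borel_on)
    moreover have "sets \<nu> = sets \<mu>" using sets by simp
    ultimately show ?case
      using emeasure_divide_eq_odds[of \<nu> \<mu> "A j"] fills T_eq A_pos finite[OF A_K A_borel] by simp
  qed
  have "T \<longlonglongrightarrow> t"
    unfolding T_def using ev by (intro lim[OF \<rho>(2,1)]) (auto elim: eventually_mono)
  then have "(\<lambda>j. ennreal (T j) / ennreal (1 - T j)) \<longlonglongrightarrow> ennreal t / ennreal (1 - t)"
    using ev t by (intro tendsto_ennreal_odds) (auto elim: eventually_mono)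
  moreover have "\<forall>\<^sub>F j in sequentially. ennreal (T j) / ennreal (1 - T j) = emeasure \<mu> (A j) / emeasure \<nu> (A j)"
    using ev by (auto elim: eventually_mono)
  ultimately show "(\<lambda>j. emeasure \<mu> (A j) / emeasure \<nu> (A j)) \<longlonglongrightarrow> ennreal t / ennreal (1 - t)"
    by (rule Lim_transform_eventually)
qed

lemma RN_deriv_add_measure_unit_interval:
  assumes I: "open I" and sets: "sets \<mu> = sets (borel_on I)" "sets \<nu> = sets (borel_on I)"
    and \<sigma>: "sigma_finite_measure (add_measure \<mu> \<nu>)"
  obtains a where "a \<in> borel_measurable borel" "\<And>x. 0 \<le> a x" "\<And>x. a x \<le> 1"
    "AE x in add_measure \<mu> \<nu>. RN_deriv (add_measure \<mu> \<nu>) \<mu> x = ennreal (a x) \<and>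
       RN_deriv (add_measure \<mu> \<nu>) \<nu> x = ennreal (1 - a x)"
proof -
  let ?\<gamma> = "add_measure \<mu> \<nu>"
  interpret sigma_finite_measure ?\<gamma> by (rule \<sigma>)
  have sets_\<gamma>: "sets ?\<gamma> = sets (borel_on I)" using sets by simp
  have space_\<gamma>: "space ?\<gamma> = I"
    using sets_eq_imp_space_eq[OF sets_\<gamma>] by (simp add: space_restrict_space)
  have ac: "absolutely_continuous ?\<gamma> \<mu>" "absolutely_continuous ?\<gamma> \<nu>"
    using sets by (auto simp: absolutely_continuous_def null_sets_add_measure)
  define a0 b0 where "a0 = RN_deriv ?\<gamma> \<mu>" and "b0 = RN_deriv ?\<gamma> \<nu>"
  have a0 [measurable]: "a0 \<in> borel_measurable ?\<gamma>" and b0 [measurable]: "b0 \<in> borel_measurable ?\<gamma>"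
    unfolding a0_def b0_def by (rule borel_measurable_RN_deriv)+
  have "sets \<mu> = sets ?\<gamma>" "sets \<nu> = sets ?\<gamma>" using sets by simp_all
  from density_RN_deriv_add_measure[OF \<sigma> this ac]
  have "density ?\<gamma> (\<lambda>x. a0 x + b0 x) = density ?\<gamma> (\<lambda>_. 1)"
    unfolding a0_def b0_def density_1 by (rule sym)
  then have sum_1: "AE x in ?\<gamma>. a0 x + b0 x = 1"
    by (subst (asm) density_unique_iff) auto
  define a where "a x = (if x \<in> I then min 1 (enn2real (a0 x)) else 0)" for x
  have "(\<lambda>x. min 1 (enn2real (a0 x))) \<in> borel_measurable ?\<gamma>" by measurable
  then have "(\<lambda>x. min 1 (enn2real (a0 x))) \<in> borel_measurable (borel_on I)"
    by (simp only: measurable_cong_sets[OF sets_\<gamma> refl])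
  then have "a \<in> borel_measurable borel"
    unfolding a_def using I by (subst (asm) measurable_restrict_space_iff) auto
  moreover have "0 \<le> a x" "a x \<le> 1" for x by (auto simp: a_def)
  moreover have "AE x in ?\<gamma>. a0 x = ennreal (a x) \<and> b0 x = ennreal (1 - a x)"
    using sum_1 AE_space
  proof eventually_elim
    case (elim x)
    then show ?case using ennreal_add_eq_1[OF elim(1)] space_\<gamma> by (simp add: a_def)
  qed
  ultimately show ?thesis using that unfolding a0_def b0_def by blast
qed

lemma AE_imp_of_AE_localized:
  assumes G: "sets G = sets (borel_on I)" and K: "K \<in> sets borel" "K \<subseteq> I"
    and ae: "AE x in localized G K. P x"
  shows "AE x in G. x \<in> K \<longrightarrow> P x"
proof -
  from ae obtain N where N: "{x \<in> space (localized G K). \<not> P x} \<subseteq> N"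
      "emeasure (localized G K) N = 0" "N \<in> sets (localized G K)"
    by (rule AE_E)
  have "emeasure G (K \<inter> N) = 0"
    using N(2,3) emeasure_localized[OF G K] by simp
  moreover have "K \<inter> N \<in> sets G"
    using N(3) K G by (auto intro: borel_subset_in_borel_on)
  moreover have "{x \<in> space G. \<not> (x \<in> K \<longrightarrow> P x)} \<subseteq> K \<inter> N"
    using N(1) sets_eq_imp_space_eq[OF sets_localized] by auto
  ultimately show ?thesis by (intro AE_I'[of "K \<inter> N"]) auto
qed

lemma AE_Dbar_add_measure:
  assumes I: "open I" and lf: "locally_finite_on I \<mu>" "locally_finite_on I \<nu>"
    and a [measurable]: "a \<in> borel_measurable borel" and a_bounds: "\<And>x. 0 \<le> a x" "\<And>x. a x \<le> 1"
    and \<mu>_eq: "\<mu> = density (add_measure \<mu> \<nu>) (\<lambda>x. ennreal (a x))"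
  shows "AE x in add_measure \<mu> \<nu>. Dbar \<mu> \<nu> I x (ennreal (a x) / ennreal (1 - a x))"
proof -
  let ?\<gamma> = "add_measure \<mu> \<nu>"
  have sets: "sets \<mu> = sets (borel_on I)" "sets \<nu> = sets (borel_on I)"
    using lf by (simp_all add: locally_finite_on_def)
  have sets_\<gamma>: "sets ?\<gamma> = sets (borel_on I)" using sets by simp
  have lf_\<gamma>: "locally_finite_on I ?\<gamma>" by (rule locally_finite_on_add_measure[OF I lf])
  obtain C :: "nat \<Rightarrow> real set" where C: "\<And>n. compact (C n)" "\<And>n. C n \<subseteq> I"
      "\<And>x. x \<in> I \<Longrightarrow> \<exists>n. \<exists>\<delta>>0. ball x \<delta> \<subseteq> C n"
    using open_compact_exhaustion[OF I] by blast
  have C_borel: "C n \<in> sets borel" for n using C(1) by (rule borel_compact)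
  have fin: "emeasure ?\<gamma> (C n) \<noteq> \<infinity>" for n
    using lf_\<gamma> C(1,2) by (auto simp: locally_finite_on_def less_top[symmetric])
  have unit: "unit_density (localized ?\<gamma> (C n)) a" for n
  proof (intro unit_density.intro finite_borel_measure.intro finite_measureI
      finite_borel_measure_axioms.intro unit_density_axioms.intro)
    have "space (localized ?\<gamma> (C n)) = UNIV"
      using sets_eq_imp_space_eq[OF sets_localized] by simp
    then show "emeasure (localized ?\<gamma> (C n)) (space (localized ?\<gamma> (C n))) \<noteq> \<infinity>"
      using emeasure_localized[OF sets_\<gamma> C_borel[of n] C(2)[of n], of UNIV] fin[of n] by simp
  qed (use a_bounds in auto)
  have P_eq: "density (localized ?\<gamma> (C n)) (\<lambda>x. ennreal (a x)) = localized \<mu> (C n)" for n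
  proof -
    have "localized \<mu> (C n) = localized (density ?\<gamma> (\<lambda>x. ennreal (a x))) (C n)"
      using arg_cong[OF \<mu>_eq, of "\<lambda>M. localized M (C n)"] .
    also have "\<dots> = density (localized ?\<gamma> (C n)) (\<lambda>x. ennreal (a x))"
      by (rule localized_density[OF sets_\<gamma> C_borel C(2)]) measurable
    finally show ?thesis by simp
  qed
  have "AE x in localized ?\<gamma> (C n). (\<forall>r>0. 0 < measure (localized ?\<gamma> (C n)) (ball x r)) \<and>
      (\<forall>c \<rho> A. 0 < c \<longrightarrow> \<rho> \<longlonglongrightarrow> 0 \<longrightarrow>
         (\<forall>\<^sub>F j in sequentially. fills_ball (localized ?\<gamma> (C n)) c x (\<rho> j) (A j)) \<longrightarrow>
         (\<lambda>j. measure (localized \<mu> (C n)) (A j) / measure (localized ?\<gamma> (C n)) (A j)) \<longlonglongrightarrow> a x)" for n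
    using unit_density.AE_ratio_tendsto[OF unit[of n]] unfolding P_eq .
  then have "AE x in ?\<gamma>. \<forall>n. x \<in> C n \<longrightarrow> (\<forall>r>0. 0 < measure (localized ?\<gamma> (C n)) (ball x r)) \<and>
      (\<forall>c \<rho> A. 0 < c \<longrightarrow> \<rho> \<longlonglongrightarrow> 0 \<longrightarrow>
         (\<forall>\<^sub>F j in sequentially. fills_ball (localized ?\<gamma> (C n)) c x (\<rho> j) (A j)) \<longrightarrow>
         (\<lambda>j. measure (localized \<mu> (C n)) (A j) / measure (localized ?\<gamma> (C n)) (A j)) \<longlonglongrightarrow> a x)"
    unfolding AE_all_countable by (intro allI AE_imp_of_AE_localized[OF sets_\<gamma> C_borel C(2)])
  moreover have "space \<mu> = I"
    using sets_eq_imp_space_eq[OF sets(1)] by (simp add: space_restrict_space)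
  then have "AE x in ?\<gamma>. x \<in> I" using AE_space[of ?\<gamma>] by simp
  ultimately show ?thesis
  proof eventually_elim
    case (elim x)
    then obtain n \<delta> where \<delta>: "0 < \<delta>" "ball x \<delta> \<subseteq> C n" using C(3) by blast
    then have "x \<in> C n" by auto
    note good = mp[OF spec[OF elim(1), of n] this]
    show ?case
      by (rule Dbar_if_localized_ratio_tendsto[OF I sets C(1,2) fin \<delta>]) (use good a_bounds in auto)
  qed
qed

theorem theoremC7:
  fixes I :: "real set" and \<mu> \<nu> :: "real measure"
  assumes "open I" and "is_interval I"
    and "locally_finite_on I \<mu>" and "locally_finite_on I \<nu>"
  shows "\<exists>f N. gen_RN_deriv I \<mu> \<nu> f \<and> N \<in> null_sets \<mu> \<and> N \<in> null_sets \<nu> \<and>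
           (\<forall>x \<in> I - N. Dbar \<mu> \<nu> I x (f x) \<and> Dsym \<mu> \<nu> x (f x))"
proof -
  let ?\<gamma> = "add_measure \<mu> \<nu>"
  have sets: "sets \<mu> = sets (borel_on I)" "sets \<nu> = sets (borel_on I)"
    using assms(3,4) by (simp_all add: locally_finite_on_def)
  have \<sigma>: "sigma_finite_measure \<mu>" "sigma_finite_measure \<nu>" "sigma_finite_measure ?\<gamma>"
    using assms(1,3,4) locally_finite_on_add_measure[OF assms(1,3,4)]
    by (auto intro: sigma_finite_measure_if_locally_finite_on)
  obtain a where a: "a \<in> borel_measurable borel" "\<And>x. 0 \<le> a x" "\<And>x. a x \<le> 1"
      and RN: "AE x in ?\<gamma>. RN_deriv ?\<gamma> \<mu> x = ennreal (a x) \<and> RN_deriv ?\<gamma> \<nu> x = ennreal (1 - a x)"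
    using RN_deriv_add_measure_unit_interval[OF assms(1) sets \<sigma>(3)] by blast
  have "\<mu> = density ?\<gamma> (RN_deriv ?\<gamma> \<mu>)"
    using sets by (intro sigma_finite_measure.density_RN_deriv[OF \<sigma>(3), symmetric])
      (auto simp: absolutely_continuous_def null_sets_add_measure)
  also have "\<dots> = density ?\<gamma> (\<lambda>x. ennreal (a x))"
  proof (rule density_cong)
    have "(\<lambda>x. x) \<in> measurable ?\<gamma> borel" using sets by (intro measurable_ident_borel_on) simp
    from measurable_comp[OF this a(1)] show "(\<lambda>x. ennreal (a x)) \<in> borel_measurable ?\<gamma>"
      by (simp add: comp_def)
    show "AE x in ?\<gamma>. RN_deriv ?\<gamma> \<mu> x = ennreal (a x)" using RN by eventually_elim simp
  qed simp
  finally have Dbar: "AE x in ?\<gamma>. Dbar \<mu> \<nu> I x (ennreal (a x) / ennreal (1 - a x))"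
    by (rule AE_Dbar_add_measure[OF assms(1,3,4) a])
  define f where "f = (\<lambda>x. RN_deriv ?\<gamma> \<mu> x / RN_deriv ?\<gamma> \<nu> x)"
  have "AE x in ?\<gamma>. x \<in> I \<longrightarrow> Dbar \<mu> \<nu> I x (f x) \<and> Dsym \<mu> \<nu> x (f x)"
    using Dbar RN by eventually_elim (auto simp: f_def intro: Dsym_if_Dbar[OF assms(1)])
  then obtain N where N: "{x \<in> space ?\<gamma>. \<not> (x \<in> I \<longrightarrow> Dbar \<mu> \<nu> I x (f x) \<and> Dsym \<mu> \<nu> x (f x))} \<subseteq> N"
      "emeasure ?\<gamma> N = 0" "N \<in> sets ?\<gamma>"
    by (rule AE_E)
  have "N \<in> null_sets ?\<gamma>" using N(2,3) by auto
  then have "N \<in> null_sets \<mu>" "N \<in> null_sets \<nu>" using sets by (simp_all add: null_sets_add_measure)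
  moreover have "gen_RN_deriv I \<mu> \<nu> f"
    unfolding f_def by (rule gen_RN_deriv_RN_deriv_add_measure[OF sets \<sigma>])
  moreover have "space ?\<gamma> = I"
    using sets_eq_imp_space_eq[of ?\<gamma> "borel_on I"] sets by (simp add: space_restrict_space)
  ultimately show ?thesis using N(1) by blast
qed

end
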